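(* Let $p\ge2$ be an integer. For $k\ge0$ and $1\le t\le p-1$ define \[ \gamma_{k,t}=\frac{1}{t(k+p)^{2p/(3p+1)}},\qquad \theta_{k,t}=\frac{\prod_{1\le s\le p-1,\,s\neq t}\big(1-s(k+p)^{2p/(3p+1)}\big)}{t(k+p)^{2p/(3p+1)}\prod_{1\le s\le p-1,\,s\neq t}\big((t-s)(k+p)^{2p/(3p+1)}\big)},\qquad p_k=(k+p)^{(p-1)/(3p+1)}. \] Then for all $k\ge0$: $\sum_{t=1}^{p-1}\theta_{k,t}/\gamma_{k,t}^{j}=1$ for $j=1,\dots,p-1$; \[ \sum_{t=1}^{p-1}\theta_{k,t}\in\Big[\frac{1}{2(k+p)^{2p/(3p+1)}},\ \frac{\ln(2p-1)}{(k+p)^{2p/(3p+1)}}\Big]\subset(0,1);\qquad \theta_{k,t}^2\le\frac{16((p-1)!)^2}{t^2(k+p)^{4p/(3p+1)}}\ \ (1\le t\le p-1); \] and $\big(1-\sum_{t=1}^{p-1}\theta_{k,t}\big)p_{k+1}\le\big(1-\frac{1}{p+1}\sum_{t=1}^{p-1}\theta_{k,t}\big)p_k$.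
   Context: An empty product equals $1$. *)

theory Defs
  imports Complex_Main
begin

definition aa :: "nat \<Rightarrow> nat \<Rightarrow> real" where
  "aa p k = (real k + real p) powr (2 * real p / (3 * real p + 1))"

definition gam :: "nat \<Rightarrow> nat \<Rightarrow> nat \<Rightarrow> real" where
  "gam p k t = 1 / (real t * aa p k)"

definition theta :: "nat \<Rightarrow> nat \<Rightarrow> nat \<Rightarrow> real" where
  "theta p k t =
     (\<Prod>s\<in>{1..p-1} - {t}. (1 - real s * aa p k)) /
     (real t * aa p k * (\<Prod>s\<in>{1..p-1} - {t}. ((real t - real s) * aa p k)))"

definition pseq :: "nat \<Rightarrow> nat \<Rightarrow> real" where
  "pseq p k = (real k + real p) powr ((real p - 1) / (3 * real p + 1))"

end

theory Submission
  imports Defs "HOL-Analysis.Harmonic_Numbers" "HOL-Computational_Algebra.Polynomial"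
begin

text \<open>Put \<open>a = (k + p) powr (2p/(3p+1))\<close> and take the nodes \<open>x s = s a\<close> for \<open>1 \<le> s \<le> p - 1\<close>.
  Then \<open>theta t * x t\<close> is the Lagrange basis polynomial of the node \<open>x t\<close> evaluated at 1, so
  \<open>\<Sum>t. theta t * (x t)^j\<close> is the interpolant of \<open>X^(j-1)\<close> at 1, namely 1. Adding the node 0 and
  interpolating the constant 1 gives \<open>\<Sum>t. theta t = 1 - \<Prod>s. (1 - 1/(s a))\<close>, which lies between
  \<open>1/a\<close> and \<open>harm (p - 1) / a \<le> ln (2p - 1) / a\<close>. Every factor of \<open>theta t\<close> has modulus at most
  \<open>s\<close>, whence \<open>|theta t| \<le> (p - 1)! / (t a)\<close>. The last inequality is Bernoulli's inequality
  \<open>(1 + 1/m) powr b \<le> 1 + b/m\<close> for \<open>m = k + p\<close> and \<open>b \<le> 1/3\<close>, combined with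
  \<open>1/m \<le> 1/a \<le> \<Sum>t. theta t\<close>.\<close>

lemma lagrange_interpolation:
  fixes x :: "'a \<Rightarrow> 'b :: field" and q :: "'b poly"
  assumes fin: "finite I" and inj: "inj_on x I" and deg: "degree q < card I"
  shows "(\<Sum>t\<in>I. poly q (x t) * (\<Prod>s\<in>I-{t}. (y - x s) / (x t - x s))) = poly q y"
proof -
  define L where "L = (\<Sum>t\<in>I. smult (poly q (x t) / (\<Prod>s\<in>I-{t}. x t - x s)) (\<Prod>s\<in>I-{t}. [:-x s, 1:]))"
  have poly_L: "poly L z = (\<Sum>t\<in>I. poly q (x t) * (\<Prod>s\<in>I-{t}. (z - x s) / (x t - x s)))" for z
    unfolding L_def by (simp add: poly_sum poly_prod prod_dividef)
  have "degree L \<le> card I - 1"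
    unfolding L_def
  proof (rule degree_sum_le[OF fin])
    fix t assume "t \<in> I"
    have "degree (\<Prod>s\<in>I-{t}. [:-x s, 1:]) \<le> (\<Sum>s\<in>I-{t}. degree [:-x s, 1:])"
      using degree_prod_sum_le[of "I-{t}" "\<lambda>s. [:-x s, 1:]"] fin by (simp add: o_def)
    also have "\<dots> = card I - 1" using fin \<open>t \<in> I\<close> by simp
    finally show "degree (smult (poly q (x t) / (\<Prod>s\<in>I-{t}. x t - x s)) (\<Prod>s\<in>I-{t}. [:-x s, 1:])) \<le> card I - 1"
      using degree_smult_le order_trans by blast
  qed
  moreover have "poly L (x u) = poly q (x u)" if "u \<in> I" for u
  proof -
    have "poly L (x u) = poly q (x u) * (\<Prod>s\<in>I-{u}. (x u - x s) / (x u - x s))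
        + (\<Sum>t\<in>I-{u}. poly q (x t) * (\<Prod>s\<in>I-{t}. (x u - x s) / (x t - x s)))"
      unfolding poly_L using fin that by (simp add: sum.remove)
    also have "(\<Sum>t\<in>I-{u}. poly q (x t) * (\<Prod>s\<in>I-{t}. (x u - x s) / (x t - x s))) = 0"
      using fin that by (intro sum.neutral ballI) (force simp: prod_zero_iff)
    also have "(\<Prod>s\<in>I-{u}. (x u - x s) / (x u - x s)) = 1"
      using inj that by (intro prod.neutral) (auto dest: inj_onD)
    finally show ?thesis by simp
  qed
  ultimately have "L = q"
    using deg card_image[OF inj] by (intro poly_eqI_degree[of "x ` I"]) auto
  then show ?thesis using poly_L[of y] by simp
qed

lemma one_minus_prod_le_sum:
  fixes u :: "'a \<Rightarrow> real"
  assumes "finite A" "\<And>s. s \<in> A \<Longrightarrow> 0 \<le> u s \<and> u s \<le> 1"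
  shows "1 - (\<Prod>s\<in>A. 1 - u s) \<le> (\<Sum>s\<in>A. u s)"
  using assms
proof (induction A rule: finite_induct)
  case empty
  then show ?case by simp
next
  case (insert x F)
  have "0 \<le> (\<Prod>s\<in>F. 1 - u s)" "(\<Prod>s\<in>F. 1 - u s) \<le> 1"
    using insert.prems by (auto intro!: prod_nonneg prod_le_1)
  then have "u x * (\<Prod>s\<in>F. 1 - u s) \<le> u x"
    using insert.prems by (simp add: mult_left_le)
  then show ?case using insert by (simp add: algebra_simps)
qed

lemma harm_le_ln: "harm n \<le> ln (2 * real n + 1)"
proof (induction n)
  case 0
  then show ?case by (simp add: harm_def)
next
  case (Suc n)
  have "1 / real (Suc n) = 2 * ((2 * real n + 3) - (2 * real n + 1)) / ((2 * real n + 1) + (2 * real n + 3))"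
    by (simp add: field_simps)
  also have "\<dots> \<le> ln (2 * real n + 3) - ln (2 * real n + 1)"
    by (rule ln_inverse_approx_ge) auto
  finally show ?case using Suc by (simp add: harm_Suc inverse_eq_divide add_ac)
qed

lemma ln_le_powr_div:
  fixes z c :: real
  assumes "0 < z" "0 < c"
  shows "ln z \<le> z powr c / (c * exp 1)"
proof -
  have "ln (z powr c / exp 1) \<le> z powr c / exp 1 - 1"
    using assms by (intro ln_le_minus_one) simp
  then have "c * ln z \<le> z powr c / exp 1"
    using assms by (simp add: ln_div)
  then show ?thesis using assms by (simp add: field_simps)
qed

lemma ln_two_mult_minus_one_less_powr:
  assumes "1 \<le> n"
  shows "ln (2 * real n - 1) < real n powr (4/7)"
proof -
  have "(2 powr (4/7::real)) ^ 7 = 2 powr (4/7 * 7)"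
    by (simp add: powr_power)
  also have "\<dots> = 16" by simp
  also have "16 < (153/100::real) ^ 7" by (simp add: power_divide)
  finally have "2 powr (4/7::real) < 153/100"
    by (rule power_less_imp_less_base) simp
  moreover have "27/10 < exp (1::real)"
    using e_approx_32 by (simp add: abs_if split: if_split_asm)
  ultimately have const: "7/4 * 2 powr (4/7) < exp (1::real)" by simp
  have "ln (2 * real n - 1) \<le> (2 * real n - 1) powr (4/7) / (4/7 * exp 1)"
    using assms by (intro ln_le_powr_div) auto
  also have "\<dots> \<le> (2 * real n) powr (4/7) / (4/7 * exp 1)"
    using assms by (intro divide_right_mono powr_mono2) auto
  also have "\<dots> = (7/4 * 2 powr (4/7)) / exp 1 * real n powr (4/7)"
    by (simp add: powr_mult field_simps)
  also have "\<dots> < real n powr (4/7)"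
    using const assms by (simp add: field_simps)
  finally show ?thesis .
qed

text \<open>Bernoulli's inequality \<open>(1 + 1/m) powr b \<le> 1 + b/m\<close> is Young's inequality with the
  weights \<open>b\<close> and \<open>1 - b\<close>.\<close>
lemma one_minus_mult_powr_add_one_le:
  fixes m b S q :: real
  assumes "0 < m" "0 \<le> b" "b \<le> 1/3" "1 / m \<le> S" "S \<le> 1" "2 \<le> q"
  shows "(1 - S) * (m + 1) powr b \<le> (1 - S / (q + 1)) * m powr b"
proof -
  have "(1 + 1 / m) powr b * 1 powr (1 - b) \<le> b * (1 + 1 / m) + (1 - b) * 1"
    using assms by (intro Youngs_inequality_0) (auto intro: add_pos_pos)
  then have bernoulli: "(1 + 1 / m) powr b \<le> 1 + b / m" by (simp add: algebra_simps)
  have "m + 1 = m * (1 + 1 / m)" using assms by (simp add: field_simps)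
  then have "(m + 1) powr b = m powr b * (1 + 1 / m) powr b"
    using assms by (simp add: powr_mult)
  also have "\<dots> \<le> m powr b * (1 + b / m)"
    using bernoulli by (intro mult_left_mono) auto
  finally have "(1 - S) * (m + 1) powr b \<le> (1 - S) * (1 + b / m) * m powr b"
    using assms by (simp add: mult_left_mono mult_ac)
  also have "(1 - S) * (1 + b / m) \<le> 1 - S / (q + 1)"
  proof -
    have S_pos: "0 \<le> S" using assms by (smt (verit) divide_pos_pos)
    have "b / m \<le> (1 / m) / 3" using assms by (simp add: field_simps)
    also have "\<dots> \<le> S / 3" using assms by simp
    finally have "b / m \<le> S / 3" .
    moreover have "S / (q + 1) \<le> S / 3"
      using assms S_pos by (intro divide_left_mono) auto
    moreover have "0 \<le> S * (b / m)" using assms S_pos by simp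
    moreover have "(1 - S) * (1 + b / m) = 1 - S + b / m - S * (b / m)"
      using assms by (simp add: field_simps)
    ultimately show ?thesis using S_pos by linarith
  qed
  then have "(1 - S) * (1 + b / m) * m powr b \<le> (1 - S / (q + 1)) * m powr b"
    by (intro mult_right_mono) auto
  finally show ?thesis .
qed

text \<open>For the nodes \<open>s * a\<close>, \<open>s = 1..n\<close>: the Lagrange basis polynomial of the node \<open>t * a\<close>,
  evaluated at 1 and divided by that node. \<open>theta p k\<close> is the case \<open>a = aa p k\<close>, \<open>n = p - 1\<close>.\<close>
definition lagrange_weight :: "real \<Rightarrow> nat \<Rightarrow> nat \<Rightarrow> real" where
  "lagrange_weight a n t =
     (\<Prod>s\<in>{1..n}-{t}. (1 - real s * a) / (real t * a - real s * a)) / (real t * a)"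

lemma theta_eq_lagrange_weight: "theta p k t = lagrange_weight (aa p k) (p - 1) t"
  unfolding theta_def lagrange_weight_def by (simp add: prod_dividef left_diff_distrib)

lemma inj_on_of_nat_mult:
  fixes a :: real
  assumes "a \<noteq> 0"
  shows "inj_on (\<lambda>s::nat. real s * a) I"
  using assms by (auto intro!: inj_onI)

lemma lagrange_weight_moments:
  assumes "0 < a" "j \<in> {1..n}"
  shows "(\<Sum>t=1..n. lagrange_weight a n t * (real t * a) ^ j) = 1"
proof -
  define x where "x s = real s * a" for s :: nat
  have "(\<Sum>t=1..n. lagrange_weight a n t * (real t * a) ^ j)
      = (\<Sum>t\<in>{1..n}. poly (monom 1 (j - 1)) (x t) * (\<Prod>s\<in>{1..n}-{t}. (1 - x s) / (x t - x s)))"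
    using assms by (intro sum.cong) (auto simp: lagrange_weight_def x_def poly_monom power_eq_if)
  also have "\<dots> = poly (monom 1 (j - 1)) 1"
    using assms unfolding x_def
    by (intro lagrange_interpolation inj_on_of_nat_mult) (auto simp: degree_monom_eq)
  finally show ?thesis by (simp add: poly_monom)
qed

text \<open>Interpolating the constant 1 at the extra node 0 turns the weights into a product.\<close>
lemma sum_lagrange_weight:
  assumes "0 < a"
  shows "(\<Sum>t=1..n. lagrange_weight a n t) = 1 - (\<Prod>s=1..n. 1 - 1 / (real s * a))"
proof -
  define x where "x s = real s * a" for s :: nat
  define w where "w t = (\<Prod>s\<in>{0..n}-{t}. (1 - x s) / (x t - x s))" for t
  have "(\<Sum>t\<in>{0..n}. poly 1 (x t) * w t) = poly 1 1"
    unfolding w_def x_def using assms by (intro lagrange_interpolation inj_on_of_nat_mult) auto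
  then have "w 0 + (\<Sum>t=1..n. w t) = 1"
    by (simp add: sum.atLeast_Suc_atMost)
  moreover have "w 0 = (\<Prod>s=1..n. 1 - 1 / (real s * a))"
  proof -
    have "{0..n} - {0} = {1..n}" by auto
    then show ?thesis
      unfolding w_def x_def using assms by (intro prod.cong) (auto simp: field_simps)
  qed
  moreover have "w t = lagrange_weight a n t" if "t \<in> {1..n}" for t
  proof -
    have "{0..n} - {t} = insert 0 ({1..n} - {t})" using that by auto
    then show ?thesis
      using that unfolding w_def x_def lagrange_weight_def by (simp add: prod_dividef)
  qed
  ultimately show ?thesis by simp
qed

lemma sum_lagrange_weight_bounds:
  assumes "1 \<le> a" "1 \<le> n"
  shows "1 / a \<le> (\<Sum>t=1..n. lagrange_weight a n t)"
    and "(\<Sum>t=1..n. lagrange_weight a n t) \<le> ln (2 * real n + 1) / a"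
proof -
  have sum_eq: "(\<Sum>t=1..n. lagrange_weight a n t) = 1 - (\<Prod>s=1..n. 1 - 1 / (real s * a))"
    by (rule sum_lagrange_weight) (use assms in simp)
  have factor_bounds: "0 \<le> 1 / (real s * a) \<and> 1 / (real s * a) \<le> 1" if "s \<in> {1..n}" for s
  proof -
    have "1 \<le> real s * a" using that assms mult_mono[of 1 "real s" 1 a] by auto
    then show ?thesis by (auto simp: divide_le_eq_1)
  qed
  have "(\<Prod>s=1..n. 1 - 1 / (real s * a)) = (1 - 1 / a) * (\<Prod>s\<in>{1..n}-{1}. 1 - 1 / (real s * a))"
    using assms by (subst prod.remove[of _ 1]) auto
  also have "\<dots> \<le> 1 - 1 / a"
    using assms factor_bounds by (intro mult_left_le prod_le_1) auto
  finally show "1 / a \<le> (\<Sum>t=1..n. lagrange_weight a n t)"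
    unfolding sum_eq by simp
  have "(\<Sum>t=1..n. lagrange_weight a n t) \<le> (\<Sum>s=1..n. 1 / (real s * a))"
    unfolding sum_eq using factor_bounds by (intro one_minus_prod_le_sum) auto
  also have "\<dots> = harm n / a"
    by (simp add: harm_def sum_divide_distrib inverse_eq_divide)
  also have "\<dots> \<le> ln (2 * real n + 1) / a"
    using assms harm_le_ln by (intro divide_right_mono) auto
  finally show "(\<Sum>t=1..n. lagrange_weight a n t) \<le> ln (2 * real n + 1) / a" .
qed

lemma abs_lagrange_weight_le:
  assumes "1 \<le> a" "t \<in> {1..n}"
  shows "\<bar>lagrange_weight a n t\<bar> \<le> fact n / (real t * a)"
proof -
  have factor_le: "\<bar>(1 - real s * a) / (real t * a - real s * a)\<bar> \<le> real s"
    if "s \<in> {1..n} - {t}" for s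
  proof -
    have "1 \<le> \<bar>real t - real s\<bar>" using that by auto
    then have "a \<le> \<bar>real t * a - real s * a\<bar>"
      using assms by (simp add: abs_mult mult_le_cancel_right1 flip: left_diff_distrib)
    moreover have "1 \<le> real s * a"
      using that assms mult_mono[of 1 "real s" 1 a] by auto
    then have "\<bar>1 - real s * a\<bar> \<le> real s * a" by simp
    ultimately have "\<bar>1 - real s * a\<bar> / \<bar>real t * a - real s * a\<bar> \<le> real s * a / a"
      using assms by (intro frac_le) auto
    then show ?thesis using assms by (simp add: abs_divide)
  qed
  have "\<bar>\<Prod>s\<in>{1..n}-{t}. (1 - real s * a) / (real t * a - real s * a)\<bar> \<le> (\<Prod>s\<in>{1..n}-{t}. real s)"
    unfolding abs_prod using factor_le by (intro prod_mono) auto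
  also have "\<dots> \<le> (\<Prod>s\<in>{1..n}. real s)" by (intro prod_mono2) auto
  also have "\<dots> = fact n" by (simp add: fact_prod)
  finally show ?thesis
    using assms unfolding lagrange_weight_def by (simp add: abs_divide divide_right_mono)
qed

lemma aa_bounds:
  assumes "2 \<le> p"
  shows "1 < aa p k" "aa p k \<le> real k + real p" "real p powr (4/7) \<le> aa p k"
proof -
  let ?m = "real k + real p" and ?e = "2 * real p / (3 * real p + 1)"
  have m: "2 \<le> ?m" and e: "0 < ?e" "?e < 1" "4/7 \<le> ?e"
    using assms by (auto simp: field_simps)
  show "1 < aa p k" unfolding aa_def using m e powr_less_mono[of 0 ?e ?m] by simp
  show "aa p k \<le> ?m" unfolding aa_def using m e powr_mono[of ?e 1 ?m] by simp
  have "real p powr (4/7) \<le> ?m powr (4/7)" by (intro powr_mono2) auto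
  also have "\<dots> \<le> ?m powr ?e" using m e by (intro powr_mono) auto
  finally show "real p powr (4/7) \<le> aa p k" unfolding aa_def .
qed

lemma aa_squared: "(aa p k)\<^sup>2 = (real k + real p) powr (4 * real p / (3 * real p + 1))"
proof -
  have "(aa p k)\<^sup>2 = (real k + real p) powr (2 * real p / (3 * real p + 1) + 2 * real p / (3 * real p + 1))"
    unfolding aa_def power2_eq_square by (rule powr_add[symmetric])
  also have "2 * real p / (3 * real p + 1) + 2 * real p / (3 * real p + 1) = 4 * real p / (3 * real p + 1)"
    by (simp add: add_divide_distrib[symmetric])
  finally show ?thesis .
qed

lemma theta_moments:
  assumes "2 \<le> p" "j \<in> {1..p-1}"
  shows "(\<Sum>t=1..p-1. theta p k t / gam p k t ^ j) = 1"
  using lagrange_weight_moments[of "aa p k" j "p - 1"] aa_bounds[OF assms(1), of k] assms(2)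
  by (simp add: theta_eq_lagrange_weight gam_def power_one_over)

lemma sum_theta_bounds:
  assumes "2 \<le> p"
  shows "1 / aa p k \<le> (\<Sum>t=1..p-1. theta p k t)"
    and "(\<Sum>t=1..p-1. theta p k t) \<le> ln (2 * real p - 1) / aa p k"
proof -
  have "2 * real (p - 1) + 1 = 2 * real p - 1" using assms by (simp add: of_nat_diff)
  then show "1 / aa p k \<le> (\<Sum>t=1..p-1. theta p k t)"
    and "(\<Sum>t=1..p-1. theta p k t) \<le> ln (2 * real p - 1) / aa p k"
    using sum_lagrange_weight_bounds[of "aa p k" "p - 1"] aa_bounds[OF assms, of k] assms
    by (simp_all add: theta_eq_lagrange_weight)
qed

lemma ln_div_aa_less_one:
  assumes "2 \<le> p"
  shows "ln (2 * real p - 1) / aa p k < 1"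
proof -
  have "ln (2 * real p - 1) < aa p k"
    using ln_two_mult_minus_one_less_powr[of p] aa_bounds[OF assms, of k] assms by simp
  then show ?thesis using aa_bounds[OF assms, of k] by simp
qed

lemma theta_squared_le:
  assumes "2 \<le> p" "t \<in> {1..p-1}"
  shows "(theta p k t)\<^sup>2 \<le> 16 * (fact (p - 1))\<^sup>2
      / ((real t)\<^sup>2 * (real k + real p) powr (4 * real p / (3 * real p + 1)))"
proof -
  have "\<bar>theta p k t\<bar> \<le> fact (p - 1) / (real t * aa p k)"
    using abs_lagrange_weight_le[of "aa p k" t "p - 1"] aa_bounds[OF assms(1), of k] assms(2)
    by (simp add: theta_eq_lagrange_weight)
  then have "(theta p k t)\<^sup>2 \<le> (fact (p - 1) / (real t * aa p k))\<^sup>2"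
    by (metis abs_ge_zero power2_abs power_mono)
  also have "\<dots> = (fact (p - 1))\<^sup>2 / ((real t)\<^sup>2 * (real k + real p) powr (4 * real p / (3 * real p + 1)))"
    by (simp add: power_divide power_mult_distrib aa_squared)
  finally have "(theta p k t)\<^sup>2 \<le> (fact (p - 1))\<^sup>2
      / ((real t)\<^sup>2 * (real k + real p) powr (4 * real p / (3 * real p + 1)))" .
  moreover have "0 \<le> (fact (p - 1))\<^sup>2
      / ((real t)\<^sup>2 * (real k + real p) powr (4 * real p / (3 * real p + 1)))"
    by (intro divide_nonneg_nonneg mult_nonneg_nonneg) auto
  ultimately show ?thesis by linarith
qed

lemma sum_theta_pseq_step:
  fixes p k :: nat
  assumes "2 \<le> p"
  defines "S \<equiv> \<Sum>t=1..p-1. theta p k t"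
  shows "(1 - S) * pseq p (k + 1) \<le> (1 - S / (real p + 1)) * pseq p k"
proof -
  have "1 / (real k + real p) \<le> 1 / aa p k"
    using aa_bounds[OF assms(1), of k] by (intro divide_left_mono) (auto intro: mult_pos_pos)
  then have "1 / (real k + real p) \<le> S"
    using sum_theta_bounds[OF assms(1), of k] unfolding S_def by linarith
  moreover have "S \<le> 1"
    using sum_theta_bounds[OF assms(1), of k] ln_div_aa_less_one[OF assms(1), of k] unfolding S_def by linarith
  ultimately have "(1 - S) * (real k + real p + 1) powr ((real p - 1) / (3 * real p + 1))
      \<le> (1 - S / (real p + 1)) * (real k + real p) powr ((real p - 1) / (3 * real p + 1))"
    using assms by (intro one_minus_mult_powr_add_one_le) (auto simp: divide_simps)
  then show ?thesis unfolding pseq_def by (simp add: add_ac)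
qed

theorem lemma5p5:
  fixes p :: nat
  assumes "p \<ge> 2"
  shows "\<forall>k::nat.
     (\<forall>j\<in>{1..p-1}. (\<Sum>t=1..p-1. theta p k t / (gam p k t) ^ j) = 1)
   \<and> 1 / (2 * (real k + real p) powr (2 * real p / (3 * real p + 1))) \<le> (\<Sum>t=1..p-1. theta p k t)
   \<and> (\<Sum>t=1..p-1. theta p k t) \<le> ln (2 * real p - 1) / (real k + real p) powr (2 * real p / (3 * real p + 1))
   \<and> 0 < 1 / (2 * (real k + real p) powr (2 * real p / (3 * real p + 1)))
   \<and> ln (2 * real p - 1) / (real k + real p) powr (2 * real p / (3 * real p + 1)) < 1
   \<and> (\<forall>t\<in>{1..p-1}. (theta p k t)\<^sup>2 \<le>
        16 * (fact (p - 1))\<^sup>2 / ((real t)\<^sup>2 * (real k + real p) powr (4 * real p / (3 * real p + 1))))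
   \<and> (1 - (\<Sum>t=1..p-1. theta p k t)) * pseq p (k + 1)
       \<le> (1 - (\<Sum>t=1..p-1. theta p k t) / (real p + 1)) * pseq p k"
proof -
  have "0 < 1 / (2 * aa p k)" "1 / (2 * aa p k) \<le> 1 / aa p k" for k
    using aa_bounds(1)[OF assms, of k] by (auto intro!: divide_left_mono mult_pos_pos)
  then show ?thesis
    unfolding aa_def[symmetric]
    using theta_moments[OF assms] sum_theta_bounds[OF assms] ln_div_aa_less_one[OF assms]
      theta_squared_le[OF assms] sum_theta_pseq_step[OF assms]
    by (blast intro: order_trans)
qed

end
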